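(* Fix an index $j$. Define $R_{j,0}(\mathbf t;x)=\mathcal D(\mathbf t;x)$ and $R_{j,k+1}(\mathbf t;x)=\frac{\partial}{\partial t_j}R_{j,k}(\mathbf t;x)+[R_{j,k}(\mathbf t;x),R_j(\mathbf t;x)]$. Then there exist coefficients $\alpha_{j,k,1}(\mathbf t;x)$, $k=0,\dots,\dim\mathfrak g$, polynomial in $x$ and not all zero, such that $\sum_k\alpha_{j,k,1}R_{j,k}=0$ and, for every $E\in\mathfrak g$, $$\sum_{k=0}^{\dim\mathfrak g}\alpha_{j,k,1}(\mathbf t;x)\frac{\partial^k}{\partial t_j^k}W_1(\mathbf t;x.E)=0.$$
   Context: Let $G\subset GL(r,\mathbb C)$ be a complex reductive Lie group given in a faithful matrix representation, with Lie algebra $\mathfrak g\subset\mathfrak{gl}(r,\mathbb C)$; ${\rm Tr}$ is the matrix trace. Let $\mathbf t=(t_1,t_2,\dots)$ be parameters ("times") in an open set. Let $\mathcal D(\mathbf t;x)$ and $R_k(\mathbf t;x)$ be $\mathfrak g$-valued, rational in $x$ (arbitrary smooth/holomorphic dependence on $\mathbf t$), and let $\Psi(\mathbf t;x)$ be an invertible $G$-valued common solution of $\frac{\partial}{\partial x}\Psi=\mathcal D\Psi$ and $\frac{\partial}{\partial t_k}\Psi=R_k\Psi$ for all $k$. For $E\in\mathfrak g$ set $M(\mathbf t;x.E)=\Psi(\mathbf t;x)E\Psi(\mathbf t;x)^{-1}$ and $W_1(\mathbf t;x.E)={\rm Tr}\,\mathcal D(\mathbf t;x)M(\mathbf t;x.E)$.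 *)

theory Defs
  imports "HOL-Analysis.Analysis" "HOL-Computational_Algebra.Polynomial"
begin

type_synonym 'n cmat = "complex^'n^'n"

definition cmscale :: "complex \<Rightarrow> 'n::finite cmat \<Rightarrow> 'n cmat" where
  "cmscale c A = (\<chi> i j. c * A$i$j)"

global_interpretation cmat: vector_space "cmscale :: complex \<Rightarrow> 'n::finite cmat \<Rightarrow> 'n cmat"
  defines cmat_dim = "cmat.dim" and cmat_subspace = "cmat.subspace"
  by unfold_locales (simp_all add: cmscale_def vec_eq_iff algebra_simps)

definition mcomm :: "'n::finite cmat \<Rightarrow> 'n cmat \<Rightarrow> 'n cmat" where
  "mcomm A B = A ** B - B ** A"

primrec mpow :: "'n::finite cmat \<Rightarrow> nat \<Rightarrow> 'n cmat" where
  "mpow A 0 = mat 1"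
| "mpow A (Suc k) = A ** mpow A k"

definition mexp :: "'n::finite cmat \<Rightarrow> 'n cmat" where
  "mexp A = (\<Sum>k. (1 / fact k) *\<^sub>R mpow A k)"

definition matrix_group :: "'n::finite cmat set \<Rightarrow> bool" where
  "matrix_group G \<longleftrightarrow> G \<subseteq> {A. invertible A} \<and> mat 1 \<in> G \<and>
     (\<forall>A\<in>G. \<forall>B\<in>G. A ** B \<in> G) \<and> (\<forall>A\<in>G. matrix_inv A \<in> G)"

definition lie_algebra_of :: "'n::finite cmat set \<Rightarrow> 'n cmat set" where
  "lie_algebra_of G = {X. \<forall>s::complex. mexp (cmscale s X) \<in> G}"

definition lie_subalgebra :: "'n::finite cmat set \<Rightarrow> bool" where
  "lie_subalgebra g \<longleftrightarrow> cmat_subspace g \<and> (\<forall>A\<in>g. \<forall>B\<in>g. mcomm A B \<in> g)"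

definition lie_ideal :: "'n::finite cmat set \<Rightarrow> 'n cmat set \<Rightarrow> bool" where
  "lie_ideal I g \<longleftrightarrow> cmat_subspace I \<and> I \<subseteq> g \<and> (\<forall>A\<in>g. \<forall>B\<in>I. mcomm A B \<in> I)"

text \<open>Reductive Lie algebra: every ideal has a complementary ideal
  (equivalently, the adjoint representation is completely reducible).\<close>
definition reductive_lie_algebra :: "'n::finite cmat set \<Rightarrow> bool" where
  "reductive_lie_algebra g \<longleftrightarrow> lie_subalgebra g \<and>
     (\<forall>I. lie_ideal I g \<longrightarrow> (\<exists>J. lie_ideal J g \<and> I \<inter> J = {0} \<and>
          {a + b | a b. a \<in> I \<and> b \<in> J} = g))"

definition reductive_matrix_group :: "'n::finite cmat set \<Rightarrow> 'n cmat set \<Rightarrow> bool" where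
  "reductive_matrix_group G g \<longleftrightarrow> matrix_group G \<and> g = lie_algebra_of G \<and> reductive_lie_algebra g"

definition mat_has_deriv :: "(complex \<Rightarrow> 'n::finite cmat) \<Rightarrow> 'n cmat \<Rightarrow> complex \<Rightarrow> bool" where
  "mat_has_deriv F D s \<longleftrightarrow> (\<forall>a b. ((\<lambda>z. F z $ a $ b) has_field_derivative D $ a $ b) (at s))"

definition pderiv_t :: "'m \<Rightarrow> (('m \<Rightarrow> complex) \<Rightarrow> 'n::finite cmat) \<Rightarrow> ('m \<Rightarrow> complex) \<Rightarrow> 'n cmat" where
  "pderiv_t j F t = (\<chi> a b. deriv (\<lambda>s. F (t(j := s)) $ a $ b) (t j))"

definition pderiv_t_iter :: "'m \<Rightarrow> nat \<Rightarrow> (('m \<Rightarrow> complex) \<Rightarrow> complex) \<Rightarrow> ('m \<Rightarrow> complex) \<Rightarrow> complex" where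
  "pderiv_t_iter j k f t = (deriv ^^ k) (\<lambda>s. f (t(j := s))) (t j)"

primrec Rjk :: "(('m \<Rightarrow> complex) \<Rightarrow> complex \<Rightarrow> 'n::finite cmat) \<Rightarrow>
    ('m \<Rightarrow> ('m \<Rightarrow> complex) \<Rightarrow> complex \<Rightarrow> 'n cmat) \<Rightarrow> 'm \<Rightarrow> nat \<Rightarrow>
    ('m \<Rightarrow> complex) \<Rightarrow> complex \<Rightarrow> 'n cmat" where
  "Rjk D R j 0 = D"
| "Rjk D R j (Suc k) = (\<lambda>t x. pderiv_t j (\<lambda>t'. Rjk D R j k t' x) t + mcomm (Rjk D R j k t x) (R j t x))"

definition rational_in_x :: "('m \<Rightarrow> complex) set \<Rightarrow> complex set \<Rightarrow>
    (('m \<Rightarrow> complex) \<Rightarrow> complex \<Rightarrow> 'n::finite cmat) \<Rightarrow> bool" where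
  "rational_in_x T X F \<longleftrightarrow> (\<exists>N::nat. \<forall>a b. \<exists>p q :: nat \<Rightarrow> ('m \<Rightarrow> complex) \<Rightarrow> complex.
      (\<forall>i k. \<forall>t\<in>T. (\<lambda>s. p i (t(k := s))) holomorphic_on {s. t(k := s) \<in> T} \<and>
                     (\<lambda>s. q i (t(k := s))) holomorphic_on {s. t(k := s) \<in> T}) \<and>
      (\<forall>t\<in>T. \<forall>x\<in>X. (\<Sum>i\<le>N. q i t * x ^ i) \<noteq> 0 \<and>
          F t x $ a $ b = (\<Sum>i\<le>N. p i t * x ^ i) / (\<Sum>i\<le>N. q i t * x ^ i)))"

definition holo_in_t :: "('m \<Rightarrow> complex) set \<Rightarrow> complex set \<Rightarrow>
    (('m \<Rightarrow> complex) \<Rightarrow> complex \<Rightarrow> 'n::finite cmat) \<Rightarrow> bool" where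
  "holo_in_t T X F \<longleftrightarrow> (\<forall>t\<in>T. \<forall>x\<in>X. \<forall>k a b.
      (\<lambda>s. F (t(k := s)) x $ a $ b) holomorphic_on {s. t(k := s) \<in> T})"

definition Mfun :: "(('m \<Rightarrow> complex) \<Rightarrow> complex \<Rightarrow> 'n::finite cmat) \<Rightarrow> ('m \<Rightarrow> complex) \<Rightarrow> complex \<Rightarrow> 'n cmat \<Rightarrow> 'n cmat" where
  "Mfun Psi t x E = Psi t x ** E ** matrix_inv (Psi t x)"

definition W1 :: "(('m \<Rightarrow> complex) \<Rightarrow> complex \<Rightarrow> 'n::finite cmat) \<Rightarrow>
    (('m \<Rightarrow> complex) \<Rightarrow> complex \<Rightarrow> 'n cmat) \<Rightarrow> ('m \<Rightarrow> complex) \<Rightarrow> complex \<Rightarrow> 'n cmat \<Rightarrow> complex" where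
  "W1 D Psi t x E = trace (D t x ** Mfun Psi t x E)"

end

theory Submission
  imports Defs "HOL-Complex_Analysis.Complex_Analysis" "HOL-Library.Function_Algebras"
begin

text \<open>Along the line \<open>s \<mapsto> t(j := s)\<close> the conjugate \<open>M = \<Psi> E \<Psi>\<^sup>-\<^sup>1\<close> satisfies
  \<open>M' = [R\<^sub>j, M]\<close>, so the \<open>k\<close>-th derivative of \<open>W\<^sub>1 = tr (\<D> M)\<close> is \<open>tr (R\<^sub>j\<^sub>,\<^sub>k M)\<close>.
  Every \<open>R\<^sub>j\<^sub>,\<^sub>k\<close> takes values in \<open>\<g>\<close> (a closed subspace closed under brackets) and stays
  rational in \<open>x\<close> with holomorphically varying coefficients. For fixed \<open>t\<close>, clearing
  denominators turns \<open>R\<^sub>j\<^sub>,\<^sub>0, \<dots>, R\<^sub>j\<^sub>,\<^sub>d\<close> (\<open>d = dim \<g>\<close>) into \<open>d + 1\<close> polynomial maps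
  into \<open>\<g>\<close>; these are dependent over \<open>\<complex>[x]\<close>: evaluated at \<open>N + 1\<close> sample points, the
  \<open>(d + 1)(m + 1)\<close> maps \<open>x\<^sup>i R\<^sub>j\<^sub>,\<^sub>k\<close> (\<open>i \<le> m\<close>) outnumber the dimension \<open>(N + 1) d\<close>, and
  for \<open>m = d e\<close>, \<open>N = m + e\<close> (\<open>e\<close> bounding the degrees) the resulting polynomial
  relation has degree at most \<open>N\<close>, so it vanishes identically. Taking the trace against
  \<open>M\<close> carries the relation over to the derivatives of \<open>W\<^sub>1\<close>.\<close>

no_notation fps_nth (infixl \<open>$\<close> 75)

section \<open>Polynomials in \<open>x\<close> with holomorphic coefficients\<close>

definition holo_poly_on :: "complex set \<Rightarrow> (complex \<Rightarrow> complex poly) \<Rightarrow> bool" where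
  "holo_poly_on S P \<longleftrightarrow>
     (\<exists>n. \<forall>s\<in>S. degree (P s) \<le> n) \<and> (\<forall>i. (\<lambda>s. coeff (P s) i) holomorphic_on S)"

lemma poly_monom_sum:
  fixes c :: "nat \<Rightarrow> 'a::comm_semiring_1"
  shows "poly (\<Sum>i\<le>n. monom (c i) i) x = (\<Sum>i\<le>n. c i * x ^ i)"
  by (simp add: poly_sum poly_monom)

lemma degree_monom_sum_le: "degree (\<Sum>i\<le>n. monom (c i) i) \<le> n"
  by (intro degree_sum_le) (auto intro: order.trans[OF degree_monom_le])

lemma poly_eq_coeff_sum:
  fixes p :: "'a::comm_semiring_1 poly"
  assumes "degree p \<le> n"
  shows "poly p x = (\<Sum>i\<le>n. coeff p i * x ^ i)"
  using arg_cong[OF poly_as_sum_of_monoms'[OF assms], of "\<lambda>q. poly q x"]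
  by (simp add: poly_monom_sum)

lemma holo_poly_on_monom_sum:
  assumes "\<And>i. (\<lambda>s. c i s) holomorphic_on S"
  shows "holo_poly_on S (\<lambda>s. \<Sum>i\<le>n. monom (c i s) i)"
  unfolding holo_poly_on_def
proof (intro conjI allI)
  show "\<exists>n'. \<forall>s\<in>S. degree (\<Sum>i\<le>n. monom (c i s) i) \<le> n'"
    by (intro exI[of _ n] ballI degree_monom_sum_le)
next
  fix k
  have "coeff (\<Sum>i\<le>n. monom (c i s) i) k = (if k \<le> n then c k s else 0)" for s
    by (simp add: coeff_sum coeff_monom)
  then show "(\<lambda>s. coeff (\<Sum>i\<le>n. monom (c i s) i) k) holomorphic_on S"
    using assms by (cases "k \<le> n") simp_all
qed

lemma holo_poly_on_const: "holo_poly_on S (\<lambda>s. p)"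
  unfolding holo_poly_on_def by auto

lemma holo_poly_on_add:
  assumes "holo_poly_on S P" "holo_poly_on S Q"
  shows "holo_poly_on S (\<lambda>s. P s + Q s)"
proof -
  obtain m n where "\<forall>s\<in>S. degree (P s) \<le> m" "\<forall>s\<in>S. degree (Q s) \<le> n"
    using assms unfolding holo_poly_on_def by blast
  then have "\<forall>s\<in>S. degree (P s + Q s) \<le> max m n"
    by (metis degree_add_le max.coboundedI1 max.coboundedI2)
  moreover have "(\<lambda>s. coeff (P s + Q s) i) holomorphic_on S" for i
    using assms unfolding holo_poly_on_def by (simp add: holomorphic_on_add)
  ultimately show ?thesis
    unfolding holo_poly_on_def by blast
qed

lemma holo_poly_on_diff:
  assumes "holo_poly_on S P" "holo_poly_on S Q"
  shows "holo_poly_on S (\<lambda>s. P s - Q s)"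
proof -
  obtain m n where "\<forall>s\<in>S. degree (P s) \<le> m" "\<forall>s\<in>S. degree (Q s) \<le> n"
    using assms unfolding holo_poly_on_def by blast
  then have "\<forall>s\<in>S. degree (P s - Q s) \<le> max m n"
    by (metis degree_diff_le max.coboundedI1 max.coboundedI2)
  moreover have "(\<lambda>s. coeff (P s - Q s) i) holomorphic_on S" for i
    using assms unfolding holo_poly_on_def by (simp add: holomorphic_on_diff)
  ultimately show ?thesis
    unfolding holo_poly_on_def by blast
qed

lemma holo_poly_on_mult:
  assumes "holo_poly_on S P" "holo_poly_on S Q"
  shows "holo_poly_on S (\<lambda>s. P s * Q s)"
proof -
  obtain m n where "\<forall>s\<in>S. degree (P s) \<le> m" "\<forall>s\<in>S. degree (Q s) \<le> n"
    using assms unfolding holo_poly_on_def by blast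
  then have "\<forall>s\<in>S. degree (P s * Q s) \<le> m + n"
    by (metis add_mono degree_mult_le order_trans)
  moreover have "(\<lambda>s. coeff (P s * Q s) i) holomorphic_on S" for i
    using assms unfolding holo_poly_on_def coeff_mult
    by (intro holomorphic_on_sum holomorphic_on_mult) simp_all
  ultimately show ?thesis
    unfolding holo_poly_on_def by blast
qed

lemma holomorphic_on_holo_poly:
  assumes "holo_poly_on S P"
  shows "(\<lambda>s. poly (P s) x) holomorphic_on S"
proof -
  obtain n where n: "\<forall>s\<in>S. degree (P s) \<le> n"
    and c: "\<And>i. (\<lambda>s. coeff (P s) i) holomorphic_on S"
    using assms unfolding holo_poly_on_def by blast
  have "(\<lambda>s. \<Sum>i\<le>n. coeff (P s) i * x ^ i) holomorphic_on S"
    using c by (intro holomorphic_on_sum holomorphic_on_mult holomorphic_on_const)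
  then show ?thesis
    by (rule holomorphic_transform) (simp add: n poly_eq_coeff_sum[of "P _" n])
qed

lemma holo_poly_on_deriv:
  assumes S: "open S" and P: "holo_poly_on S P"
  shows "\<exists>P'. holo_poly_on S P' \<and>
    (\<forall>s\<in>S. \<forall>x. ((\<lambda>s. poly (P s) x) has_field_derivative poly (P' s) x) (at s))"
proof -
  obtain n where n: "\<forall>s\<in>S. degree (P s) \<le> n"
    and c: "\<And>i. (\<lambda>s. coeff (P s) i) holomorphic_on S"
    using P unfolding holo_poly_on_def by blast
  define P' where "P' s = (\<Sum>i\<le>n. monom (deriv (\<lambda>s. coeff (P s) i) s) i)" for s
  have "holo_poly_on S P'"
    unfolding P'_def using c S by (intro holo_poly_on_monom_sum holomorphic_deriv)
  moreover have "((\<lambda>s. poly (P s) x) has_field_derivative poly (P' s) x) (at s)"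
    if s: "s \<in> S" for s x
  proof (rule has_field_derivative_transform_within_open[OF _ S s])
    show "((\<lambda>s. \<Sum>i\<le>n. coeff (P s) i * x ^ i) has_field_derivative poly (P' s) x) (at s)"
      unfolding P'_def poly_monom_sum
      by (intro DERIV_sum DERIV_cmult_right holomorphic_derivI[OF c S s])
    show "(\<Sum>i\<le>n. coeff (P y) i * x ^ i) = poly (P y) x" if "y \<in> S" for y
      using n that by (simp add: poly_eq_coeff_sum[of "P y" n])
  qed
  ultimately show ?thesis by blast
qed

section \<open>Rational functions of \<open>x\<close> with holomorphic coefficients\<close>

definition holo_rational_on ::
    "complex set \<Rightarrow> complex set \<Rightarrow> (complex \<Rightarrow> complex \<Rightarrow> complex) \<Rightarrow> bool" where
  "holo_rational_on S X F \<longleftrightarrow> (\<exists>P Q. holo_poly_on S P \<and> holo_poly_on S Q \<and>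
     (\<forall>s\<in>S. \<forall>x\<in>X. poly (Q s) x \<noteq> 0 \<and> F s x = poly (P s) x / poly (Q s) x))"

lemma holo_rational_onI:
  assumes "holo_poly_on S P" "holo_poly_on S Q"
    and "\<And>s x. s \<in> S \<Longrightarrow> x \<in> X \<Longrightarrow> poly (Q s) x \<noteq> 0 \<and> F s x = poly (P s) x / poly (Q s) x"
  shows "holo_rational_on S X F"
  using assms unfolding holo_rational_on_def by blast

lemma holo_rational_on_const: "holo_rational_on S X (\<lambda>s x. c)"
  by (rule holo_rational_onI[of S "\<lambda>s. [:c:]" "\<lambda>s. 1"]) (simp_all add: holo_poly_on_const)

lemma holo_rational_on_add:
  assumes "holo_rational_on S X F" "holo_rational_on S X G"
  shows "holo_rational_on S X (\<lambda>s x. F s x + G s x)"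
proof -
  obtain P Q where F: "holo_poly_on S P" "holo_poly_on S Q"
    "\<forall>s\<in>S. \<forall>x\<in>X. poly (Q s) x \<noteq> 0 \<and> F s x = poly (P s) x / poly (Q s) x"
    using assms(1) unfolding holo_rational_on_def by blast
  obtain P' Q' where G: "holo_poly_on S P'" "holo_poly_on S Q'"
    "\<forall>s\<in>S. \<forall>x\<in>X. poly (Q' s) x \<noteq> 0 \<and> G s x = poly (P' s) x / poly (Q' s) x"
    using assms(2) unfolding holo_rational_on_def by blast
  show ?thesis
    by (rule holo_rational_onI[of S "\<lambda>s. P s * Q' s + P' s * Q s" "\<lambda>s. Q s * Q' s"])
      (simp_all add: F G holo_poly_on_add holo_poly_on_mult add_frac_eq)
qed

lemma holo_rational_on_mult:
  assumes "holo_rational_on S X F" "holo_rational_on S X G"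
  shows "holo_rational_on S X (\<lambda>s x. F s x * G s x)"
proof -
  obtain P Q where F: "holo_poly_on S P" "holo_poly_on S Q"
    "\<forall>s\<in>S. \<forall>x\<in>X. poly (Q s) x \<noteq> 0 \<and> F s x = poly (P s) x / poly (Q s) x"
    using assms(1) unfolding holo_rational_on_def by blast
  obtain P' Q' where G: "holo_poly_on S P'" "holo_poly_on S Q'"
    "\<forall>s\<in>S. \<forall>x\<in>X. poly (Q' s) x \<noteq> 0 \<and> G s x = poly (P' s) x / poly (Q' s) x"
    using assms(2) unfolding holo_rational_on_def by blast
  show ?thesis
    by (rule holo_rational_onI[of S "\<lambda>s. P s * P' s" "\<lambda>s. Q s * Q' s"])
      (simp_all add: F G holo_poly_on_mult)
qed

lemma holo_rational_on_diff:
  assumes "holo_rational_on S X F" "holo_rational_on S X G"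
  shows "holo_rational_on S X (\<lambda>s x. F s x - G s x)"
  using holo_rational_on_add[OF assms(1) holo_rational_on_mult[OF holo_rational_on_const assms(2)],
      of "-1"]
  by simp

lemma holo_rational_on_sum:
  assumes "finite I" "\<And>i. i \<in> I \<Longrightarrow> holo_rational_on S X (F i)"
  shows "holo_rational_on S X (\<lambda>s x. \<Sum>i\<in>I. F i s x)"
  using assms
  by (induction I rule: finite_induct) (simp_all add: holo_rational_on_const holo_rational_on_add)

lemma holomorphic_on_holo_rational:
  assumes "holo_rational_on S X F" "x \<in> X"
  shows "(\<lambda>s. F s x) holomorphic_on S"
proof -
  obtain P Q where PQ: "holo_poly_on S P" "holo_poly_on S Q"
    "\<forall>s\<in>S. \<forall>x\<in>X. poly (Q s) x \<noteq> 0 \<and> F s x = poly (P s) x / poly (Q s) x"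
    using assms(1) unfolding holo_rational_on_def by blast
  have "(\<lambda>s. poly (P s) x / poly (Q s) x) holomorphic_on S"
    using PQ assms(2) by (intro holomorphic_on_divide holomorphic_on_holo_poly) auto
  then show ?thesis
    by (rule holomorphic_transform) (simp add: PQ(3) assms(2))
qed

lemma holo_rational_on_deriv:
  assumes S: "open S" and F: "holo_rational_on S X F"
  shows "holo_rational_on S X (\<lambda>s x. deriv (\<lambda>s. F s x) s)"
proof -
  obtain P Q where PQ: "holo_poly_on S P" "holo_poly_on S Q"
    "\<forall>s\<in>S. \<forall>x\<in>X. poly (Q s) x \<noteq> 0 \<and> F s x = poly (P s) x / poly (Q s) x"
    using F unfolding holo_rational_on_def by blast
  obtain P' where P': "holo_poly_on S P'"
    "\<forall>s\<in>S. \<forall>x. ((\<lambda>s. poly (P s) x) has_field_derivative poly (P' s) x) (at s)"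
    using holo_poly_on_deriv[OF S PQ(1)] by blast
  obtain Q' where Q': "holo_poly_on S Q'"
    "\<forall>s\<in>S. \<forall>x. ((\<lambda>s. poly (Q s) x) has_field_derivative poly (Q' s) x) (at s)"
    using holo_poly_on_deriv[OF S PQ(2)] by blast
  have deriv: "deriv (\<lambda>s. F s x) s = poly (P' s * Q s - P s * Q' s) x / poly (Q s * Q s) x"
    if s: "s \<in> S" and x: "x \<in> X" for s x
  proof (rule DERIV_imp_deriv, rule has_field_derivative_transform_within_open[OF _ S s])
    show "((\<lambda>s. poly (P s) x / poly (Q s) x) has_field_derivative
        poly (P' s * Q s - P s * Q' s) x / poly (Q s * Q s) x) (at s)"
      using DERIV_divide[OF P'(2)[rule_format, OF s] Q'(2)[rule_format, OF s]]
        PQ(3)[rule_format, OF s x]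
      by simp
    show "poly (P y) x / poly (Q y) x = F y x" if "y \<in> S" for y
      using PQ(3)[rule_format, OF that x] by simp
  qed
  show ?thesis
  proof (rule holo_rational_onI[of S "\<lambda>s. P' s * Q s - P s * Q' s" "\<lambda>s. Q s * Q s"])
    show "holo_poly_on S (\<lambda>s. P' s * Q s - P s * Q' s)"
      by (intro holo_poly_on_diff holo_poly_on_mult PQ(1,2) P'(1) Q'(1))
    show "holo_poly_on S (\<lambda>s. Q s * Q s)"
      by (intro holo_poly_on_mult PQ(2))
    show "poly (Q s * Q s) x \<noteq> 0 \<and>
        deriv (\<lambda>s. F s x) s = poly (P' s * Q s - P s * Q' s) x / poly (Q s * Q s) x"
      if "s \<in> S" "x \<in> X" for s x
      using PQ(3)[rule_format, OF that] deriv[OF that] by simp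
  qed
qed

definition rational_fun_on :: "complex set \<Rightarrow> (complex \<Rightarrow> complex) \<Rightarrow> bool" where
  "rational_fun_on X f \<longleftrightarrow> (\<exists>p q. \<forall>x\<in>X. poly q x \<noteq> 0 \<and> f x = poly p x / poly q x)"

lemma holo_rational_on_imp_rational_fun_on:
  "holo_rational_on S X F \<Longrightarrow> s \<in> S \<Longrightarrow> rational_fun_on X (F s)"
  unfolding holo_rational_on_def rational_fun_on_def by blast

definition mat_deriv :: "(complex \<Rightarrow> 'n::finite cmat) \<Rightarrow> complex \<Rightarrow> 'n cmat" where
  "mat_deriv F s = (\<chi> a b. deriv (\<lambda>s. F s $ a $ b) s)"

definition holo_rational_mat_on ::
    "complex set \<Rightarrow> complex set \<Rightarrow> (complex \<Rightarrow> complex \<Rightarrow> 'n::finite cmat) \<Rightarrow> bool" where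
  "holo_rational_mat_on S X F \<longleftrightarrow> (\<forall>a b. holo_rational_on S X (\<lambda>s x. F s x $ a $ b))"

lemma holo_rational_mat_on_add:
  "holo_rational_mat_on S X F \<Longrightarrow> holo_rational_mat_on S X G \<Longrightarrow>
    holo_rational_mat_on S X (\<lambda>s x. F s x + G s x)"
  unfolding holo_rational_mat_on_def by (simp add: holo_rational_on_add)

lemma holo_rational_mat_on_diff:
  "holo_rational_mat_on S X F \<Longrightarrow> holo_rational_mat_on S X G \<Longrightarrow>
    holo_rational_mat_on S X (\<lambda>s x. F s x - G s x)"
  unfolding holo_rational_mat_on_def by (simp add: holo_rational_on_diff)

lemma holo_rational_mat_on_mult:
  "holo_rational_mat_on S X F \<Longrightarrow> holo_rational_mat_on S X G \<Longrightarrow>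
    holo_rational_mat_on S X (\<lambda>s x. F s x ** G s x)"
  unfolding holo_rational_mat_on_def matrix_matrix_mult_def
  by (simp add: holo_rational_on_sum holo_rational_on_mult)

lemma holo_rational_mat_on_mcomm:
  "holo_rational_mat_on S X F \<Longrightarrow> holo_rational_mat_on S X G \<Longrightarrow>
    holo_rational_mat_on S X (\<lambda>s x. mcomm (F s x) (G s x))"
  unfolding mcomm_def by (intro holo_rational_mat_on_diff holo_rational_mat_on_mult)

lemma holo_rational_mat_on_mat_deriv:
  "open S \<Longrightarrow> holo_rational_mat_on S X F \<Longrightarrow>
    holo_rational_mat_on S X (\<lambda>s x. mat_deriv (\<lambda>s. F s x) s)"
  unfolding holo_rational_mat_on_def mat_deriv_def by (simp add: holo_rational_on_deriv)

lemma holo_rational_mat_on_has_mat_deriv: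
  assumes S: "open S" "s \<in> S" and F: "holo_rational_mat_on S X F" and x: "x \<in> X"
  shows "mat_has_deriv (\<lambda>s. F s x) (mat_deriv (\<lambda>s. F s x) s) s"
  unfolding mat_has_deriv_def mat_deriv_def
proof (intro allI)
  fix a b
  have "holo_rational_on S X (\<lambda>s x. F s x $ a $ b)"
    using F unfolding holo_rational_mat_on_def by blast
  then show "((\<lambda>s. F s x $ a $ b) has_field_derivative
      (\<chi> a b. deriv (\<lambda>s. F s x $ a $ b) s) $ a $ b) (at s)"
    using holomorphic_derivI[OF holomorphic_on_holo_rational S] x by simp
qed

lemma holo_rational_mat_on_line:
  fixes F :: "('a \<Rightarrow> complex) \<Rightarrow> complex \<Rightarrow> 'n::finite cmat"
  assumes F: "rational_in_x T X F" and t: "t \<in> T"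
  shows "holo_rational_mat_on {s. t(j := s) \<in> T} X (\<lambda>s x. F (t(j := s)) x)"
  unfolding holo_rational_mat_on_def
proof (intro allI)
  fix a b
  obtain N where "\<forall>a b. \<exists>p q :: nat \<Rightarrow> ('a \<Rightarrow> complex) \<Rightarrow> complex.
      (\<forall>i k. \<forall>t\<in>T. (\<lambda>s. p i (t(k := s))) holomorphic_on {s. t(k := s) \<in> T} \<and>
                     (\<lambda>s. q i (t(k := s))) holomorphic_on {s. t(k := s) \<in> T}) \<and>
      (\<forall>t\<in>T. \<forall>x\<in>X. (\<Sum>i\<le>N. q i t * x ^ i) \<noteq> 0 \<and>
          F t x $ a $ b = (\<Sum>i\<le>N. p i t * x ^ i) / (\<Sum>i\<le>N. q i t * x ^ i))"
    using F unfolding rational_in_x_def by blast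
  then obtain p q :: "nat \<Rightarrow> ('a \<Rightarrow> complex) \<Rightarrow> complex" where
    hol: "\<forall>i k. \<forall>t\<in>T. (\<lambda>s. p i (t(k := s))) holomorphic_on {s. t(k := s) \<in> T} \<and>
                     (\<lambda>s. q i (t(k := s))) holomorphic_on {s. t(k := s) \<in> T}" and
    eq: "\<forall>t\<in>T. \<forall>x\<in>X. (\<Sum>i\<le>N. q i t * x ^ i) \<noteq> 0 \<and>
          F t x $ a $ b = (\<Sum>i\<le>N. p i t * x ^ i) / (\<Sum>i\<le>N. q i t * x ^ i)"
    by blast
  show "holo_rational_on {s. t(j := s) \<in> T} X (\<lambda>s x. F (t(j := s)) x $ a $ b)"
  proof (rule holo_rational_onI[where P = "\<lambda>s. \<Sum>i\<le>N. monom (p i (t(j := s))) i"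
        and Q = "\<lambda>s. \<Sum>i\<le>N. monom (q i (t(j := s))) i"])
    show "holo_poly_on {s. t(j := s) \<in> T} (\<lambda>s. \<Sum>i\<le>N. monom (p i (t(j := s))) i)"
      using hol t by (intro holo_poly_on_monom_sum) blast
    show "holo_poly_on {s. t(j := s) \<in> T} (\<lambda>s. \<Sum>i\<le>N. monom (q i (t(j := s))) i)"
      using hol t by (intro holo_poly_on_monom_sum) blast
  qed (use eq in \<open>simp add: poly_monom_sum\<close>)
qed

section \<open>Calculus of matrix-valued functions\<close>

lemma matrix_add_rdistrib: "((A::'a::semiring_1^'n::finite^'m) + B) ** C = A ** C + B ** C"
  by (simp add: matrix_matrix_mult_def vec_eq_iff sum.distrib algebra_simps)

lemma matrix_diff_ldistrib: "(A::'a::ring_1^'n::finite^'m) ** (B - C) = A ** B - A ** C"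
  by (simp add: matrix_matrix_mult_def vec_eq_iff sum_subtractf algebra_simps)

lemma matrix_diff_rdistrib: "((A::'a::ring_1^'n::finite^'m) - B) ** C = A ** C - B ** C"
  by (simp add: matrix_matrix_mult_def vec_eq_iff sum_subtractf algebra_simps)

lemma matrix_mul_uminus_right: "(A::'a::ring_1^'n::finite^'m) ** (- B) = - (A ** B)"
  by (simp add: matrix_matrix_mult_def vec_eq_iff sum_negf)

lemma trace_mult_mcomm: "trace (A ** mcomm B C) = trace (mcomm A B ** C)"
  using trace_mul_sym[of "A ** C" B]
  by (simp add: mcomm_def matrix_diff_ldistrib matrix_diff_rdistrib trace_sub matrix_mul_assoc)

lemma trace_sum_cmscale_mult:
  "trace ((\<Sum>k\<in>K. cmscale (c k) (A k)) ** M) = (\<Sum>k\<in>K. c k * trace (A k ** M))"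
proof -
  have "trace ((\<Sum>k\<in>K. cmscale (c k) (A k)) ** M)
      = (\<Sum>i\<in>UNIV. \<Sum>l\<in>UNIV. \<Sum>k\<in>K. c k * A k $ i $ l * M $ l $ i)"
    by (simp add: trace_def matrix_matrix_mult_def cmscale_def sum_component
        sum_distrib_right mult.assoc)
  also have "\<dots> = (\<Sum>k\<in>K. \<Sum>i\<in>UNIV. \<Sum>l\<in>UNIV. c k * A k $ i $ l * M $ l $ i)"
    by (simp add: sum.swap[of _ K])
  also have "\<dots> = (\<Sum>k\<in>K. c k * trace (A k ** M))"
    by (simp add: trace_def matrix_matrix_mult_def sum_distrib_left mult.assoc)
  finally show ?thesis .
qed

lemma mat_has_deriv_mult:
  fixes F G :: "complex \<Rightarrow> 'n::finite cmat"
  assumes "mat_has_deriv F F' s" "mat_has_deriv G G' s"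
  shows "mat_has_deriv (\<lambda>s. F s ** G s) (F' ** G s + F s ** G') s"
  unfolding mat_has_deriv_def
proof (intro allI)
  fix a b
  have "((\<lambda>s. F s $ a $ k * G s $ k $ b) has_field_derivative
      F' $ a $ k * G s $ k $ b + F s $ a $ k * G' $ k $ b) (at s)" for k
    using DERIV_mult[of "\<lambda>s. F s $ a $ k" "F' $ a $ k" s UNIV "\<lambda>s. G s $ k $ b" "G' $ k $ b"]
      assms unfolding mat_has_deriv_def by (simp add: mult.commute)
  then have "((\<lambda>s. \<Sum>k\<in>UNIV. F s $ a $ k * G s $ k $ b) has_field_derivative
      (\<Sum>k\<in>UNIV. F' $ a $ k * G s $ k $ b + F s $ a $ k * G' $ k $ b)) (at s)"
    by (rule DERIV_sum)
  then show "((\<lambda>s. (F s ** G s) $ a $ b) has_field_derivative (F' ** G s + F s ** G') $ a $ b) (at s)"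
    by (simp add: matrix_matrix_mult_def sum.distrib)
qed

lemma mat_has_deriv_const: "mat_has_deriv (\<lambda>s. A) 0 s"
  unfolding mat_has_deriv_def by simp

lemma mat_has_deriv_unique: "mat_has_deriv F A s \<Longrightarrow> mat_has_deriv F B s \<Longrightarrow> A = B"
  unfolding mat_has_deriv_def vec_eq_iff using DERIV_unique by blast

lemma mat_has_deriv_transform_within_open:
  assumes "mat_has_deriv F F' s" "open S" "s \<in> S" "\<And>y. y \<in> S \<Longrightarrow> F y = G y"
  shows "mat_has_deriv G F' s"
  unfolding mat_has_deriv_def
proof (intro allI)
  fix a b
  have "((\<lambda>s. F s $ a $ b) has_field_derivative F' $ a $ b) (at s)"
    using assms(1) unfolding mat_has_deriv_def by blast
  then show "((\<lambda>s. G s $ a $ b) has_field_derivative F' $ a $ b) (at s)"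
    by (rule has_field_derivative_transform_within_open[OF _ assms(2,3)]) (simp add: assms(4))
qed

lemma has_field_derivative_trace:
  "mat_has_deriv F F' s \<Longrightarrow> ((\<lambda>s. trace (F s)) has_field_derivative trace F') (at s)"
  unfolding trace_def mat_has_deriv_def by (intro DERIV_sum) auto

lemma matrix_inv_right:
  assumes "invertible (A::'a::comm_ring_1^'n::finite^'n)"
  shows "A ** matrix_inv A = mat 1"
  using someI_ex[OF assms[unfolded invertible_def]] unfolding matrix_inv_def by blast

lemma matrix_inv_left:
  assumes "invertible (A::'a::comm_ring_1^'n::finite^'n)"
  shows "matrix_inv A ** A = mat 1"
  using someI_ex[OF assms[unfolded invertible_def]] unfolding matrix_inv_def by blast

lemma matrix_inv_entry_cramer:
  assumes "invertible (A::'a::field^'n::finite^'n)"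
  shows "matrix_inv A $ k $ c =
    det (\<chi> i j. if j = k then (if i = c then 1 else 0) else A $ i $ j) / det A"
proof -
  let ?e = "\<chi> i. if i = c then (1::'a) else 0"
  have "det A \<noteq> 0" using assms invertible_det_nz by blast
  moreover have "A *v (\<chi> k. matrix_inv A $ k $ c) = ?e"
    using matrix_inv_right[OF assms]
    by (simp add: vec_eq_iff matrix_vector_mult_def matrix_matrix_mult_def mat_def)
  ultimately have "(\<chi> k. matrix_inv A $ k $ c) =
      (\<chi> k. det (\<chi> i j. if j = k then ?e $ i else A $ i $ j) / det A)"
    using cramer by blast
  then have "(\<chi> k. matrix_inv A $ k $ c) $ k =
      (\<chi> k. det (\<chi> i j. if j = k then ?e $ i else A $ i $ j) / det A) $ k"
    by simp
  moreover have "(\<chi> i j. if j = k then ?e $ i else A $ i $ j) =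
      (\<chi> i j. if j = k then (if i = c then 1 else 0) else A $ i $ j)"
    by (simp add: vec_eq_iff)
  ultimately show ?thesis
    by simp
qed

lemma holomorphic_on_det:
  fixes F :: "complex \<Rightarrow> complex^'n::finite^'n"
  assumes "\<And>a b. (\<lambda>s. F s $ a $ b) holomorphic_on S"
  shows "(\<lambda>s. det (F s)) holomorphic_on S"
  unfolding det_def using assms
  by (intro holomorphic_on_sum holomorphic_on_mult holomorphic_on_const holomorphic_on_prod) auto

lemma holomorphic_on_matrix_inv:
  fixes F :: "complex \<Rightarrow> complex^'n::finite^'n"
  assumes "\<And>a b. (\<lambda>s. F s $ a $ b) holomorphic_on S" "\<And>s. s \<in> S \<Longrightarrow> invertible (F s)"
  shows "(\<lambda>s. matrix_inv (F s) $ k $ c) holomorphic_on S"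
proof -
  have "(\<lambda>s. det (\<chi> i j. if j = k then (if i = c then 1 else 0) else F s $ i $ j) / det (F s))
      holomorphic_on S"
  proof (intro holomorphic_on_divide holomorphic_on_det)
    show "(\<lambda>s. (\<chi> i j. if j = k then (if i = c then 1 else 0) else F s $ i $ j) $ a $ b)
        holomorphic_on S" for a b
      using assms(1) by (cases "b = k") auto
    show "det (F s) \<noteq> 0" if "s \<in> S" for s
      using assms(2)[OF that] invertible_det_nz by blast
  qed (rule assms(1))
  then show ?thesis
    by (rule holomorphic_transform) (simp add: assms(2) matrix_inv_entry_cramer)
qed

text \<open>Differentiating \<open>\<psi> \<psi>\<^sup>-\<^sup>1 = 1\<close> gives the derivative of the inverse once it is known to
  exist; existence comes from Cramer's rule.\<close>

lemma mat_has_deriv_matrix_inv: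
  fixes psi Rj :: "complex \<Rightarrow> 'n::finite cmat"
  assumes S: "open S" and inv: "\<And>s. s \<in> S \<Longrightarrow> invertible (psi s)"
    and dpsi: "\<And>s. s \<in> S \<Longrightarrow> mat_has_deriv psi (Rj s ** psi s) s" and s: "s \<in> S"
  shows "mat_has_deriv (\<lambda>s. matrix_inv (psi s)) (- (matrix_inv (psi s) ** Rj s)) s"
proof -
  define V where "V s = matrix_inv (psi s)" for s
  have "(\<lambda>s. psi s $ a $ b) holomorphic_on S" for a b
    using dpsi unfolding holomorphic_on_open[OF S] mat_has_deriv_def by blast
  then have "(\<lambda>s. V s $ a $ b) holomorphic_on S" for a b
    unfolding V_def using inv by (rule holomorphic_on_matrix_inv)
  then have dV: "mat_has_deriv V (mat_deriv V s) s"
    unfolding mat_has_deriv_def mat_deriv_def using holomorphic_derivI[OF _ S s] by simp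
  have "mat_has_deriv (\<lambda>s. psi s ** V s) (Rj s ** psi s ** V s + psi s ** mat_deriv V s) s"
    by (rule mat_has_deriv_mult[OF dpsi[OF s] dV])
  moreover have "mat_has_deriv (\<lambda>s. psi s ** V s) 0 s"
    by (rule mat_has_deriv_transform_within_open[OF mat_has_deriv_const S s])
      (simp add: V_def matrix_inv_right inv)
  ultimately have "Rj s ** psi s ** V s + psi s ** mat_deriv V s = 0"
    by (rule mat_has_deriv_unique)
  then have "V s ** (Rj s ** psi s ** V s + psi s ** mat_deriv V s) = 0"
    by simp
  then have "V s ** Rj s ** (psi s ** V s) + (V s ** psi s) ** mat_deriv V s = 0"
    by (simp add: matrix_add_ldistrib matrix_mul_assoc)
  then have "mat_deriv V s = - (V s ** Rj s)"
    using inv[OF s] by (simp add: V_def matrix_inv_right matrix_inv_left eq_neg_iff_add_eq_0 add.commute)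
  then show ?thesis using dV unfolding V_def by simp
qed

lemma mat_has_deriv_conj:
  fixes psi Rj :: "complex \<Rightarrow> 'n::finite cmat"
  assumes S: "open S" and inv: "\<And>s. s \<in> S \<Longrightarrow> invertible (psi s)"
    and dpsi: "\<And>s. s \<in> S \<Longrightarrow> mat_has_deriv psi (Rj s ** psi s) s" and s: "s \<in> S"
  shows "mat_has_deriv (\<lambda>s. psi s ** E ** matrix_inv (psi s))
    (mcomm (Rj s) (psi s ** E ** matrix_inv (psi s))) s"
proof -
  have "mat_has_deriv (\<lambda>s. psi s ** E ** matrix_inv (psi s))
      ((Rj s ** psi s ** E + psi s ** 0) ** matrix_inv (psi s)
        + psi s ** E ** (- (matrix_inv (psi s) ** Rj s))) s"
    by (intro mat_has_deriv_mult mat_has_deriv_const dpsi[OF s]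
        mat_has_deriv_matrix_inv[OF S inv dpsi s])
  then show ?thesis
    by (simp add: mcomm_def matrix_mul_uminus_right matrix_mul_assoc)
qed

text \<open>Each step is \<open>(tr (f\<^sub>k M))' = tr (f\<^sub>k' M + f\<^sub>k [R, M]) = tr (f\<^sub>k\<^sub>+\<^sub>1 M)\<close>, by
  cyclicity of the trace.\<close>

lemma higher_deriv_trace_flow:
  fixes f :: "nat \<Rightarrow> complex \<Rightarrow> 'n::finite cmat" and M Rj :: "complex \<Rightarrow> 'n cmat"
  assumes S: "open S"
    and dM: "\<And>s. s \<in> S \<Longrightarrow> mat_has_deriv M (mcomm (Rj s) (M s)) s"
    and df: "\<And>k s. s \<in> S \<Longrightarrow> mat_has_deriv (f k) (mat_deriv (f k) s) s"
    and f_Suc: "\<And>k s. f (Suc k) s = mat_deriv (f k) s + mcomm (f k s) (Rj s)"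
    and s: "s \<in> S"
  shows "(deriv ^^ k) (\<lambda>s. trace (f 0 s ** M s)) s = trace (f k s ** M s)"
proof -
  have d: "((\<lambda>s. trace (f k s ** M s)) has_field_derivative trace (f (Suc k) s ** M s)) (at s)"
    if "s \<in> S" for k s
  proof -
    have "((\<lambda>s. trace (f k s ** M s)) has_field_derivative
        trace (mat_deriv (f k) s ** M s + f k s ** mcomm (Rj s) (M s))) (at s)"
      by (intro has_field_derivative_trace mat_has_deriv_mult df dM that)
    then show ?thesis
      by (simp add: f_Suc trace_add trace_mult_mcomm matrix_add_rdistrib)
  qed
  have "\<forall>s\<in>S. (deriv ^^ k) (\<lambda>s. trace (f 0 s ** M s)) s = trace (f k s ** M s)"
  proof (induction k)
    case (Suc k)
    show ?case
    proof
      fix s assume s: "s \<in> S"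
      have "(deriv ^^ Suc k) (\<lambda>s. trace (f 0 s ** M s)) s = deriv (\<lambda>s. trace (f k s ** M s)) s"
        using Suc.IH eventually_nhds_in_open[OF S s]
        by (auto intro!: deriv_cong_ev elim!: eventually_mono)
      also have "\<dots> = trace (f (Suc k) s ** M s)"
        by (rule DERIV_imp_deriv[OF d[OF s]])
      finally show "(deriv ^^ Suc k) (\<lambda>s. trace (f 0 s ** M s)) s = trace (f (Suc k) s ** M s)" .
    qed
  qed simp
  then show ?thesis using s by blast
qed

lemma cmat_subspace_imp_subspace:
  assumes "cmat_subspace g"
  shows "subspace g"
  unfolding subspace_def
proof (intro conjI ballI allI)
  show "0 \<in> g" by (rule cmat.subspace_0[OF assms])
  show "x + y \<in> g" if "x \<in> g" "y \<in> g" for x y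
    using cmat.subspace_add[OF assms] that by blast
  show "c *\<^sub>R x \<in> g" if "x \<in> g" for c :: real and x
  proof -
    have "(c *\<^sub>R x) $ a $ b = of_real c * x $ a $ b" for a b
      using scaleR_conv_of_real[of c "x $ a $ b"] by simp
    then have "c *\<^sub>R x = cmscale (of_real c) x"
      by (simp add: cmscale_def vec_eq_iff)
    then show ?thesis using cmat.subspace_scale[OF assms that] by simp
  qed
qed

lemma mat_deriv_in_subspace:
  fixes F :: "complex \<Rightarrow> 'n::finite cmat"
  assumes g: "cmat_subspace g" and S: "open S" "s \<in> S" and Fg: "\<forall>s\<in>S. F s \<in> g"
    and dF: "mat_has_deriv F F' s"
  shows "F' \<in> g"
proof (rule Lim_in_closed_set)
  show "closed g" by (rule closed_subspace[OF cmat_subspace_imp_subspace[OF g]])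
  show "\<forall>\<^sub>F y in at s. cmscale (1 / (y - s)) (F y - F s) \<in> g"
    using eventually_at_in_open'[OF S]
  proof (rule eventually_mono)
    show "cmscale (1 / (y - s)) (F y - F s) \<in> g" if "y \<in> S" for y
      using Fg S(2) that by (intro cmat.subspace_scale[OF g] cmat.subspace_diff[OF g]) auto
  qed
  show "((\<lambda>y. cmscale (1 / (y - s)) (F y - F s)) \<longlongrightarrow> F') (at s)"
  proof (intro vec_tendstoI)
    fix a b
    have "((\<lambda>y. (F y $ a $ b - F s $ a $ b) / (y - s)) \<longlongrightarrow> F' $ a $ b) (at s)"
      using dF unfolding mat_has_deriv_def has_field_derivative_iff by blast
    then show "((\<lambda>y. cmscale (1 / (y - s)) (F y - F s) $ a $ b) \<longlongrightarrow> F' $ a $ b) (at s)"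
      by (simp add: cmscale_def)
  qed
qed simp

section \<open>The matrices \<open>R\<^sub>j\<^sub>,\<^sub>k\<close>\<close>

lemma open_line_section:
  assumes "open (T :: ('m \<Rightarrow> complex) set)"
  shows "open {s. t(j := s) \<in> T}"
proof -
  have "continuous_on UNIV (\<lambda>s::complex. t(j := s))"
  proof (rule continuous_on_coordinatewise_then_product)
    show "continuous_on UNIV (\<lambda>s::complex. (t(j := s)) i)" for i
      by (cases "i = j") (simp_all add: continuous_on_id continuous_on_const)
  qed
  then have "open ((\<lambda>s::complex. t(j := s)) -` T)"
    using assms by (intro open_vimage) auto
  then show ?thesis by (simp add: vimage_def)
qed

lemma Rjk_Suc_eq:
  "Rjk D R j (Suc k) t x =
    mat_deriv (\<lambda>s. Rjk D R j k (t(j := s)) x) (t j) + mcomm (Rjk D R j k t x) (R j t x)"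
  by (simp add: pderiv_t_def mat_deriv_def)

declare Rjk.simps(2) [simp del]

lemma Rjk_line_holo_rational:
  assumes T: "open T" and D: "rational_in_x T X D" and R: "rational_in_x T X (R j)"
    and t: "t \<in> T"
  shows "holo_rational_mat_on {s. t(j := s) \<in> T} X (\<lambda>s x. Rjk D R j k (t(j := s)) x)"
proof (induction k)
  case 0
  show ?case unfolding Rjk.simps(1) by (rule holo_rational_mat_on_line[OF D t])
next
  case (Suc k)
  have "(\<lambda>s x. Rjk D R j (Suc k) (t(j := s)) x) = (\<lambda>s x.
      mat_deriv (\<lambda>s. Rjk D R j k (t(j := s)) x) s + mcomm (Rjk D R j k (t(j := s)) x) (R j (t(j := s)) x))"
    using Rjk_Suc_eq[of D R j k "t(j := _)"] by (simp only: fun_upd_upd fun_upd_same)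
  then show ?case
    by (simp only:) (intro holo_rational_mat_on_add holo_rational_mat_on_mat_deriv
        holo_rational_mat_on_mcomm open_line_section T Suc.IH holo_rational_mat_on_line[OF R t])
qed

lemma Rjk_in_subalgebra:
  assumes g: "cmat_subspace g" "\<forall>A\<in>g. \<forall>B\<in>g. mcomm A B \<in> g"
    and T: "open T" and D: "rational_in_x T X D" and R: "rational_in_x T X (R j)"
    and Dg: "\<forall>t\<in>T. \<forall>x\<in>X. D t x \<in> g" and Rg: "\<forall>t\<in>T. \<forall>x\<in>X. R j t x \<in> g"
  shows "\<forall>t\<in>T. \<forall>x\<in>X. Rjk D R j k t x \<in> g"
proof (induction k)
  case 0
  then show ?case using Dg by simp
next
  case (Suc k)
  show ?case
  proof (intro ballI)
    fix t x assume t: "t \<in> T" and x: "x \<in> X"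
    have tj: "t j \<in> {s. t(j := s) \<in> T}" using t by simp
    have "mat_deriv (\<lambda>s. Rjk D R j k (t(j := s)) x) (t j) \<in> g"
    proof (rule mat_deriv_in_subspace[OF g(1) open_line_section[OF T] tj])
      show "\<forall>s\<in>{s. t(j := s) \<in> T}. Rjk D R j k (t(j := s)) x \<in> g"
        using Suc.IH x by blast
      show "mat_has_deriv (\<lambda>s. Rjk D R j k (t(j := s)) x)
          (mat_deriv (\<lambda>s. Rjk D R j k (t(j := s)) x) (t j)) (t j)"
        by (rule holo_rational_mat_on_has_mat_deriv[OF open_line_section[OF T] tj
              Rjk_line_holo_rational[where R = R and j = j, OF T D R t] x])
    qed
    moreover have "mcomm (Rjk D R j k t x) (R j t x) \<in> g"
      using g(2) Suc.IH Rg t x by blast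
    ultimately show "Rjk D R j (Suc k) t x \<in> g"
      unfolding Rjk_Suc_eq by (rule cmat.subspace_add[OF g(1)])
  qed
qed

lemma pderiv_t_iter_W1:
  assumes T: "open T" and D: "rational_in_x T X D" and R: "rational_in_x T X (R j)"
    and inv: "\<forall>t\<in>T. \<forall>x\<in>X. invertible (Psi t x)"
    and dPsi: "\<forall>t\<in>T. \<forall>x\<in>X. mat_has_deriv (\<lambda>s. Psi (t(j := s)) x) (R j t x ** Psi t x) (t j)"
    and t: "t \<in> T" and x: "x \<in> X"
  shows "pderiv_t_iter j k (\<lambda>t'. W1 D Psi t' x E) t = trace (Rjk D R j k t x ** Mfun Psi t x E)"
proof -
  define S where "S = {s. t(j := s) \<in> T}"
  have S: "open S" "t j \<in> S"
    using open_line_section[OF T] t by (simp_all add: S_def)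
  have dM: "mat_has_deriv (\<lambda>s. Mfun Psi (t(j := s)) x E)
      (mcomm (R j (t(j := s)) x) (Mfun Psi (t(j := s)) x E)) s" if "s \<in> S" for s
    unfolding Mfun_def
  proof (rule mat_has_deriv_conj[OF S(1) _ _ that])
    show "invertible (Psi (t(j := s')) x)" if "s' \<in> S" for s'
      using inv that x by (simp add: S_def)
    show "mat_has_deriv (\<lambda>s. Psi (t(j := s)) x) (R j (t(j := s')) x ** Psi (t(j := s')) x) s'"
      if "s' \<in> S" for s'
      using dPsi[rule_format, of "t(j := s')" x] that x by (simp add: S_def)
  qed
  have df: "mat_has_deriv (\<lambda>s. Rjk D R j k (t(j := s)) x)
      (mat_deriv (\<lambda>s. Rjk D R j k (t(j := s)) x) s) s" if "s \<in> S" for k s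
    by (rule holo_rational_mat_on_has_mat_deriv[OF S(1) that
          Rjk_line_holo_rational[where R = R and j = j, OF T D R t, folded S_def] x])
  have f_Suc: "Rjk D R j (Suc k) (t(j := s)) x = mat_deriv (\<lambda>s. Rjk D R j k (t(j := s)) x) s
      + mcomm (Rjk D R j k (t(j := s)) x) (R j (t(j := s)) x)" for k s
    using Rjk_Suc_eq[of D R j k "t(j := s)" x] by (simp only: fun_upd_upd fun_upd_same)
  have "(deriv ^^ k) (\<lambda>s. trace (Rjk D R j 0 (t(j := s)) x ** Mfun Psi (t(j := s)) x E)) (t j)
      = trace (Rjk D R j k (t(j := t j)) x ** Mfun Psi (t(j := t j)) x E)"
    by (rule higher_deriv_trace_flow[where f = "\<lambda>k s. Rjk D R j k (t(j := s)) x"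
          and M = "\<lambda>s. Mfun Psi (t(j := s)) x E" and Rj = "\<lambda>s. R j (t(j := s)) x",
          OF S(1) dM df f_Suc S(2)])
  then show ?thesis
    by (simp add: pderiv_t_iter_def W1_def)
qed

lemma W1_relation_of_Rjk_relation:
  assumes T: "open T" and D: "rational_in_x T X D" and R: "rational_in_x T X (R j)"
    and inv: "\<forall>t\<in>T. \<forall>x\<in>X. invertible (Psi t x)"
    and dPsi: "\<forall>t\<in>T. \<forall>x\<in>X. mat_has_deriv (\<lambda>s. Psi (t(j := s)) x) (R j t x ** Psi t x) (t j)"
    and t: "t \<in> T" and x: "x \<in> X"
    and rel: "(\<Sum>k\<in>K. cmscale (c k) (Rjk D R j k t x)) = 0"
  shows "(\<Sum>k\<in>K. c k * pderiv_t_iter j k (\<lambda>t'. W1 D Psi t' x E) t) = 0"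
proof -
  have "(\<Sum>k\<in>K. c k * pderiv_t_iter j k (\<lambda>t'. W1 D Psi t' x E) t)
      = trace ((\<Sum>k\<in>K. cmscale (c k) (Rjk D R j k t x)) ** Mfun Psi t x E)"
    by (simp add: pderiv_t_iter_W1[where R = R and j = j, OF T D R inv dPsi t x]
        trace_sum_cmscale_mult)
  then show ?thesis by (simp add: rel trace_def)
qed

section \<open>Polynomial relations among maps into a subspace\<close>

context vector_space
begin

lemma nontrivial_combination_if_card_gt:
  assumes I: "finite I" and B: "finite B" and card: "card B < card I"
    and span: "\<forall>i\<in>I. v i \<in> span B"
  shows "\<exists>c. (\<exists>i\<in>I. c i \<noteq> 0) \<and> (\<Sum>i\<in>I. scale (c i) (v i)) = 0"
proof (cases "inj_on v I")
  case False
  then obtain i i' where ii: "i \<in> I" "i' \<in> I" "i \<noteq> i'" "v i = v i'"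
    unfolding inj_on_def by blast
  define c where "c l = (if l = i then 1 else if l = i' then -1 else (0::'a))" for l
  have "(\<Sum>l\<in>I. scale (c l) (v l)) = (\<Sum>l\<in>{i, i'}. scale (c l) (v l))"
    using ii I by (intro sum.mono_neutral_right) (auto simp: c_def)
  also have "\<dots> = 0" using ii by (simp add: c_def)
  finally show ?thesis using ii by (intro exI[of _ c]) (auto simp: c_def)
next
  case True
  have "dependent (v ` I)"
  proof (rule ccontr)
    assume "independent (v ` I)"
    then have "card (v ` I) \<le> card B"
      using independent_span_bound[OF B] span by auto
    then show False using card_image[OF True] card by simp
  qed
  then obtain T u where T: "finite T" "T \<subseteq> v ` I" "(\<Sum>w\<in>T. scale (u w) w) = 0"
    and u: "\<exists>w\<in>T. u w \<noteq> 0"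
    unfolding dependent_explicit by blast
  define c where "c i = (if v i \<in> T then u (v i) else 0)" for i
  have "(\<Sum>i\<in>I. scale (c i) (v i)) = (\<Sum>w\<in>v ` I. scale (if w \<in> T then u w else 0) w)"
    by (simp add: sum.reindex[OF True] c_def)
  also have "\<dots> = (\<Sum>w\<in>T. scale (u w) w)"
    using T(2) I by (intro sum.mono_neutral_cong_right) auto
  finally have "(\<Sum>i\<in>I. scale (c i) (v i)) = 0" using T(3) by simp
  moreover have "\<exists>i\<in>I. c i \<noteq> 0"
    using u T(2) unfolding c_def by force
  ultimately show ?thesis by blast
qed

end

definition cmscale_fun :: "complex \<Rightarrow> (complex \<Rightarrow> 'n::finite cmat) \<Rightarrow> complex \<Rightarrow> 'n cmat" where
  "cmscale_fun c f = (\<lambda>z. cmscale c (f z))"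

global_interpretation cmat_fun: vector_space "cmscale_fun :: complex \<Rightarrow> (complex \<Rightarrow> 'n::finite cmat) \<Rightarrow> _"
  by unfold_locales (simp_all add: cmscale_fun_def fun_eq_iff cmscale_def vec_eq_iff algebra_simps)

lemma sum_fun_apply: "(\<Sum>i\<in>A. f i) z = (\<Sum>i\<in>A. f i z)"
  by (induction A rule: infinite_finite_induct) auto

lemma cmat_span_unit_matrices:
  fixes A :: "'n::finite cmat"
  shows "A \<in> cmat.span (range (\<lambda>(p, q). \<chi> a b. if a = p \<and> b = q then 1 else 0))"
proof -
  let ?e = "\<lambda>(p, q). \<chi> a b. if a = p \<and> b = q then (1::complex) else 0"
  have "(\<Sum>pq\<in>UNIV. cmscale (A $ fst pq $ snd pq) (?e pq)) $ a $ b = A $ a $ b" for a b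
  proof -
    have "(\<Sum>pq\<in>UNIV. cmscale (A $ fst pq $ snd pq) (?e pq)) $ a $ b
        = (\<Sum>pq\<in>UNIV. if pq = (a, b) then A $ a $ b else 0)"
      unfolding sum_component by (intro sum.cong) (auto simp: cmscale_def split: if_split_asm)
    then show ?thesis by simp
  qed
  then have "A = (\<Sum>pq\<in>UNIV. cmscale (A $ fst pq $ snd pq) (?e pq))"
    by (simp add: vec_eq_iff)
  also have "\<dots> \<in> cmat.span (range ?e)"
    by (intro cmat.span_sum cmat.span_scale cmat.span_base) auto
  finally show ?thesis .
qed

lemma cmat_independent_imp_finite:
  assumes "cmat.independent (B :: 'n::finite cmat set)"
  shows "finite B"
proof -
  let ?U = "range (\<lambda>(p, q). \<chi> a b. if a = p \<and> b = q then 1 else 0) :: 'n cmat set"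
  have "finite ?U" by simp
  moreover have "B \<subseteq> cmat.span ?U" by (intro subsetI cmat_span_unit_matrices)
  ultimately show ?thesis using cmat.independent_span_bound[OF _ assms] by blast
qed

lemma supported_fun_in_span:
  fixes f :: "complex \<Rightarrow> 'n::finite cmat"
  assumes Z: "finite Z" and B: "finite B" and f: "\<forall>z\<in>Z. f z \<in> cmat.span B" "\<forall>z. z \<notin> Z \<longrightarrow> f z = 0"
  shows "f \<in> cmat_fun.span ((\<lambda>(z, A) y. if y = z then A else 0) ` (Z \<times> B))"
proof -
  let ?\<delta> = "\<lambda>z A y. if y = z then A else (0 :: 'n cmat)"
  have "?\<delta> z (f z) \<in> cmat_fun.span ((\<lambda>(z, A). ?\<delta> z A) ` (Z \<times> B))" if z: "z \<in> Z" for z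
  proof -
    obtain u where u: "f z = (\<Sum>A\<in>B. cmscale (u A) A)"
      using f(1) z unfolding cmat.span_finite[OF B] by blast
    have "?\<delta> z (f z) = (\<Sum>A\<in>B. cmscale_fun (u A) (?\<delta> z A))"
    proof
      show "?\<delta> z (f z) y = (\<Sum>A\<in>B. cmscale_fun (u A) (?\<delta> z A)) y" for y
        by (cases "y = z") (simp_all add: sum_fun_apply cmscale_fun_def u cmat.scale_zero_right)
    qed
    also have "\<dots> \<in> cmat_fun.span ((\<lambda>(z, A). ?\<delta> z A) ` (Z \<times> B))"
      using z by (intro cmat_fun.span_sum cmat_fun.span_scale cmat_fun.span_base) auto
    finally show ?thesis .
  qed
  then have "(\<Sum>z\<in>Z. ?\<delta> z (f z)) \<in> cmat_fun.span ((\<lambda>(z, A). ?\<delta> z A) ` (Z \<times> B))"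
    by (intro cmat_fun.span_sum)
  moreover have "(\<Sum>z\<in>Z. ?\<delta> z (f z)) = f"
  proof
    show "(\<Sum>z\<in>Z. ?\<delta> z (f z)) y = f y" for y
      using Z f(2) by (cases "y \<in> Z") (simp_all add: sum_fun_apply)
  qed
  ultimately show ?thesis by simp
qed

lemma pointwise_relation_on_finite_set:
  fixes v :: "'i \<Rightarrow> complex \<Rightarrow> 'n::finite cmat"
  assumes g: "cmat_subspace g" and Z: "finite Z" and I: "finite I"
    and card: "card Z * cmat_dim g < card I" and vg: "\<forall>i\<in>I. \<forall>z\<in>Z. v i z \<in> g"
  shows "\<exists>c. (\<exists>i\<in>I. c i \<noteq> 0) \<and> (\<forall>z\<in>Z. (\<Sum>i\<in>I. cmscale (c i) (v i z)) = 0)"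
proof -
  obtain B where B: "cmat.independent B" "g \<subseteq> cmat.span B" "card B = cmat_dim g"
    using cmat.basis_exists by blast
  have Bfin: "finite B" using B(1) by (rule cmat_independent_imp_finite)
  define \<Delta> where "\<Delta> = (\<lambda>(z, A) y. if y = z then A else (0 :: 'n cmat)) ` (Z \<times> B)"
  define w where "w i z = (if z \<in> Z then v i z else 0)" for i z
  have fin: "finite \<Delta>" unfolding \<Delta>_def using Z Bfin by simp
  have "card \<Delta> \<le> card Z * card B"
    unfolding \<Delta>_def using card_image_le[of "Z \<times> B"] Z Bfin by (simp add: card_cartesian_product)
  then have less: "card \<Delta> < card I" using card unfolding B(3) by linarith
  have span: "\<forall>i\<in>I. w i \<in> cmat_fun.span \<Delta>"
  proof
    fix i assume i: "i \<in> I"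
    show "w i \<in> cmat_fun.span \<Delta>"
      unfolding \<Delta>_def
    proof (rule supported_fun_in_span[OF Z Bfin])
      show "\<forall>z\<in>Z. w i z \<in> cmat.span B" using vg i B(2) unfolding w_def by auto
      show "\<forall>z. z \<notin> Z \<longrightarrow> w i z = 0" unfolding w_def by simp
    qed
  qed
  obtain c where c: "\<exists>i\<in>I. c i \<noteq> 0" "(\<Sum>i\<in>I. cmscale_fun (c i) (w i)) = 0"
    using cmat_fun.nontrivial_combination_if_card_gt[OF I fin less span] by blast
  have "(\<Sum>i\<in>I. cmscale (c i) (v i z)) = 0" if "z \<in> Z" for z
    using fun_cong[OF c(2), of z] that by (simp add: sum_fun_apply cmscale_fun_def w_def)
  then show ?thesis using c(1) by blast
qed

lemma poly_relation_extends:
  fixes P :: "'k \<Rightarrow> complex \<Rightarrow> 'n::finite cmat"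
  assumes K: "finite K" and Z: "finite Z" "Z \<subseteq> X" "card Z > m + e"
    and deg: "\<forall>k\<in>K. degree (\<beta> k) \<le> m" "\<forall>k\<in>K. \<forall>a b. degree (p k a b) \<le> e"
    and Pp: "\<forall>k\<in>K. \<forall>x\<in>X. \<forall>a b. P k x $ a $ b = poly (p k a b) x"
    and rel: "\<forall>z\<in>Z. (\<Sum>k\<in>K. cmscale (poly (\<beta> k) z) (P k z)) = 0"
    and x: "x \<in> X"
  shows "(\<Sum>k\<in>K. cmscale (poly (\<beta> k) x) (P k x)) = 0"
proof -
  define E where "E a b = (\<Sum>k\<in>K. \<beta> k * p k a b)" for a b
  have poly_E: "poly (E a b) y = (\<Sum>k\<in>K. cmscale (poly (\<beta> k) y) (P k y)) $ a $ b"
    if "y \<in> X" for a b y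
    unfolding E_def poly_sum poly_mult sum_component using Pp that by (simp add: cmscale_def)
  have "E a b = 0" for a b
  proof (rule poly_eqI_degree[of Z])
    show "poly (E a b) z = poly 0 z" if "z \<in> Z" for z
      using poly_E[of z a b] rel that Z(2) by auto
    have "degree (E a b) \<le> m + e"
      unfolding E_def
      by (intro degree_sum_le order.trans[OF degree_mult_le] add_mono) (use deg K in auto)
    then show "degree (E a b) < card Z" using Z(3) by linarith
  qed (use Z(3) in simp)
  then show ?thesis
    using poly_E[OF x] by (simp add: vec_eq_iff)
qed

lemma degree_family_bounded:
  fixes p :: "'k \<Rightarrow> 'a::finite \<Rightarrow> 'b::finite \<Rightarrow> 'c::zero poly"
  assumes "finite K"
  shows "\<exists>e. \<forall>k\<in>K. \<forall>a b. degree (p k a b) \<le> e"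
proof -
  define e where "e = Max ((\<lambda>(k, a, b). degree (p k a b)) ` (K \<times> UNIV \<times> UNIV))"
  have "degree (p k a b) \<le> e" if "k \<in> K" for k a b
  proof -
    have "degree (p k a b) \<in> (\<lambda>(k, a, b). degree (p k a b)) ` (K \<times> UNIV \<times> UNIV)"
      using that by (intro rev_image_eqI[of "(k, a, b)"]) simp_all
    then show ?thesis
      unfolding e_def using assms by (intro Max_ge) simp_all
  qed
  then show ?thesis by blast
qed

lemma monom_sum_nonzero:
  assumes "i \<le> n" "c i \<noteq> 0"
  shows "(\<Sum>i\<le>n. monom (c i) i) \<noteq> 0"
  using assms coeff_sum_monom[OF assms(1), of c] by auto

lemma poly_relation_in_subspace:
  fixes P :: "nat \<Rightarrow> complex \<Rightarrow> 'n::finite cmat" and p :: "nat \<Rightarrow> 'n \<Rightarrow> 'n \<Rightarrow> complex poly"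
  assumes g: "cmat_subspace g" and X: "infinite X"
    and Pg: "\<forall>k\<le>cmat_dim g. \<forall>x\<in>X. P k x \<in> g"
    and Pp: "\<forall>k\<le>cmat_dim g. \<forall>x\<in>X. \<forall>a b. P k x $ a $ b = poly (p k a b) x"
  shows "\<exists>\<beta>. (\<exists>k\<le>cmat_dim g. \<beta> k \<noteq> 0) \<and>
    (\<forall>x\<in>X. (\<Sum>k\<le>cmat_dim g. cmscale (poly (\<beta> k) x) (P k x)) = 0)"
proof -
  define d where "d = cmat_dim g"
  obtain e where e: "\<forall>k\<in>{..d}. \<forall>a b. degree (p k a b) \<le> e"
    using degree_family_bounded[of "{..d}" p] by blast
  define m where "m = d * e"
  obtain Z where Z: "finite Z" "card Z = m + e + 1" "Z \<subseteq> X"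
    using infinite_arbitrarily_large[OF X] by blast
  define I where "I = {..d} \<times> {..m}"
  have "finite I" unfolding I_def by simp
  moreover have "card Z * cmat_dim g < card I"
    unfolding I_def d_def[symmetric] using Z(2)
    by (simp add: m_def card_cartesian_product algebra_simps)
  moreover have "\<forall>ki\<in>I. \<forall>z\<in>Z. cmscale (z ^ snd ki) (P (fst ki) z) \<in> g"
    using Pg Z(3) unfolding I_def d_def by (auto intro: cmat.subspace_scale[OF g])
  ultimately obtain c where c: "\<exists>ki\<in>I. c ki \<noteq> 0"
    "\<forall>z\<in>Z. (\<Sum>ki\<in>I. cmscale (c ki) (cmscale (z ^ snd ki) (P (fst ki) z))) = 0"
    using pointwise_relation_on_finite_set[OF g Z(1),
        where v = "\<lambda>ki z. cmscale (z ^ snd ki) (P (fst ki) z)"] by blast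
  define \<beta> where "\<beta> k = (\<Sum>i\<le>m. monom (c (k, i)) i)" for k
  obtain k i where "k \<le> d" "i \<le> m" "c (k, i) \<noteq> 0"
    using c(1) unfolding I_def by auto
  then have "\<exists>k\<le>d. \<beta> k \<noteq> 0"
    unfolding \<beta>_def using monom_sum_nonzero[of i m "\<lambda>i. c (k, i)"] by auto
  moreover have "\<forall>x\<in>X. (\<Sum>k\<le>d. cmscale (poly (\<beta> k) x) (P k x)) = 0"
  proof
    fix x assume x: "x \<in> X"
    show "(\<Sum>k\<le>d. cmscale (poly (\<beta> k) x) (P k x)) = 0"
    proof (rule poly_relation_extends[OF _ Z(1,3) _ _ e _ _ x, where m = m])
      show "\<forall>k\<in>{..d}. degree (\<beta> k) \<le> m"
        unfolding \<beta>_def by (simp add: degree_monom_sum_le)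
      show "\<forall>k\<in>{..d}. \<forall>x\<in>X. \<forall>a b. P k x $ a $ b = poly (p k a b) x"
        using Pp unfolding d_def by simp
      have "(\<Sum>k\<le>d. cmscale (poly (\<beta> k) z) (P k z))
          = (\<Sum>ki\<in>I. cmscale (c ki) (cmscale (z ^ snd ki) (P (fst ki) z)))" for z
        unfolding I_def \<beta>_def poly_monom_sum cmat.scale_sum_left
        by (simp add: cmat.scale_scale sum.cartesian_product case_prod_beta)
      then show "\<forall>z\<in>Z. (\<Sum>k\<in>{..d}. cmscale (poly (\<beta> k) z) (P k z)) = 0"
        using c(2) by simp
    qed (use Z(2) in simp_all)
  qed
  ultimately show ?thesis unfolding d_def by blast
qed

lemma rational_family_common_denominator:
  fixes F :: "'k \<Rightarrow> complex \<Rightarrow> 'n::finite cmat"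
  assumes K: "finite K" and X: "X \<noteq> {}" and F: "\<forall>k\<in>K. \<forall>a b. rational_fun_on X (\<lambda>x. F k x $ a $ b)"
  shows "\<exists>Q p. Q \<noteq> 0 \<and> (\<forall>x\<in>X. poly Q x \<noteq> 0) \<and>
    (\<forall>k\<in>K. \<forall>x\<in>X. \<forall>a b. cmscale (poly Q x) (F k x) $ a $ b = poly (p k a b) x)"
proof -
  obtain p q where pq: "\<forall>k\<in>K. \<forall>a b. \<forall>x\<in>X.
      poly (q k a b) x \<noteq> 0 \<and> F k x $ a $ b = poly (p k a b) x / poly (q k a b) x"
    using F unfolding rational_fun_on_def by metis
  define Q where "Q = (\<Prod>(k, a, b)\<in>K \<times> UNIV \<times> UNIV. q k a b)"
  have dvd: "q k a b dvd Q" if "k \<in> K" for k a b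
    using dvd_prodI[of "K \<times> UNIV \<times> UNIV" "(k, a, b)" "\<lambda>(k, a, b). q k a b"] K that
    unfolding Q_def by simp
  have Q_nz: "poly Q x \<noteq> 0" if "x \<in> X" for x
    using pq that K unfolding Q_def by (auto simp: poly_prod prod_zero_iff)
  have entries: "cmscale (poly Q x) (F k x) $ a $ b = poly (p k a b * (Q div q k a b)) x"
    if "k \<in> K" "x \<in> X" for k a b x
  proof -
    have "poly Q x = poly (q k a b) x * poly (Q div q k a b) x"
      by (metis dvd_mult_div_cancel[OF dvd[OF that(1)]] poly_mult)
    then show ?thesis using pq that by (simp add: cmscale_def)
  qed
  have "Q \<noteq> 0" using Q_nz X by fastforce
  then show ?thesis
    using Q_nz entries by (intro exI[of _ Q] exI[of _ "\<lambda>k a b. p k a b * (Q div q k a b)"]) blast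
qed

lemma rational_relation_in_subspace:
  fixes F :: "nat \<Rightarrow> complex \<Rightarrow> 'n::finite cmat"
  assumes g: "cmat_subspace g" and X: "infinite X"
    and Fg: "\<forall>k\<le>cmat_dim g. \<forall>x\<in>X. F k x \<in> g"
    and F: "\<forall>k\<le>cmat_dim g. \<forall>a b. rational_fun_on X (\<lambda>x. F k x $ a $ b)"
  shows "\<exists>\<alpha>. (\<exists>k\<le>cmat_dim g. \<alpha> k \<noteq> 0) \<and>
    (\<forall>x\<in>X. (\<Sum>k\<le>cmat_dim g. cmscale (poly (\<alpha> k) x) (F k x)) = 0)"
proof -
  obtain Q p where Q: "Q \<noteq> 0" "\<forall>x\<in>X. poly Q x \<noteq> 0"
    and p: "\<forall>k\<in>{..cmat_dim g}. \<forall>x\<in>X. \<forall>a b. cmscale (poly Q x) (F k x) $ a $ b = poly (p k a b) x"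
    using rational_family_common_denominator[of "{..cmat_dim g}" X F] F X by fastforce
  have "\<forall>k\<le>cmat_dim g. \<forall>x\<in>X. cmscale (poly Q x) (F k x) \<in> g"
    using Fg by (auto intro: cmat.subspace_scale[OF g])
  then obtain \<beta> where \<beta>: "\<exists>k\<le>cmat_dim g. \<beta> k \<noteq> 0"
    "\<forall>x\<in>X. (\<Sum>k\<le>cmat_dim g. cmscale (poly (\<beta> k) x) (cmscale (poly Q x) (F k x))) = 0"
    using poly_relation_in_subspace[OF g X, of "\<lambda>k x. cmscale (poly Q x) (F k x)" p] p by auto
  show ?thesis
    using \<beta> Q(1) by (intro exI[of _ "\<lambda>k. \<beta> k * Q"]) (auto simp: cmat.scale_scale poly_mult)
qed

lemma Rjk_relation:
  assumes g: "cmat_subspace g" "\<forall>A\<in>g. \<forall>B\<in>g. mcomm A B \<in> g"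
    and T: "open T" and X: "open X"
    and Dg: "\<forall>t\<in>T. \<forall>x\<in>X. D t x \<in> g" and Rg: "\<forall>t\<in>T. \<forall>x\<in>X. R j t x \<in> g"
    and D: "rational_in_x T X D" and R: "rational_in_x T X (R j)" and t: "t \<in> T"
  shows "\<exists>\<alpha>. (\<exists>k\<le>cmat_dim g. \<alpha> k \<noteq> 0) \<and>
    (\<forall>x\<in>X. (\<Sum>k\<le>cmat_dim g. cmscale (poly (\<alpha> k) x) (Rjk D R j k t x)) = 0)"
proof (cases "X = {}")
  case True
  then show ?thesis by (intro exI[of _ "\<lambda>k. 1"]) auto
next
  case False
  then have "infinite X" using X finite_imp_not_open by blast
  moreover have "rational_fun_on X (\<lambda>x. Rjk D R j k t x $ a $ b)" for k a b
  proof -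
    have "holo_rational_on {s. t(j := s) \<in> T} X (\<lambda>s x. Rjk D R j k (t(j := s)) x $ a $ b)"
      using Rjk_line_holo_rational[where R = R and j = j, OF T D R t]
      unfolding holo_rational_mat_on_def by blast
    from holo_rational_on_imp_rational_fun_on[OF this, of "t j"] show ?thesis
      using t by simp
  qed
  ultimately show ?thesis
    using Rjk_in_subalgebra[where R = R and j = j, OF g T D R Dg Rg] t
    by (intro rational_relation_in_subspace[OF g(1)]) auto
qed

theorem mainTheorem5:
  fixes G g :: "'n::finite cmat set"
    and T :: "('m \<Rightarrow> complex) set" and X :: "complex set"
    and D :: "('m \<Rightarrow> complex) \<Rightarrow> complex \<Rightarrow> 'n cmat"
    and R :: "'m \<Rightarrow> ('m \<Rightarrow> complex) \<Rightarrow> complex \<Rightarrow> 'n cmat"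
    and Psi :: "('m \<Rightarrow> complex) \<Rightarrow> complex \<Rightarrow> 'n cmat"
    and j :: 'm
  assumes "reductive_matrix_group G g"
    and "open T" and "open X"
    and "\<forall>t\<in>T. \<forall>x\<in>X. D t x \<in> g"
    and "\<forall>k. \<forall>t\<in>T. \<forall>x\<in>X. R k t x \<in> g"
    and "rational_in_x T X D" and "\<forall>k. rational_in_x T X (R k)"
    and "holo_in_t T X D" and "\<forall>k. holo_in_t T X (R k)"
    and "\<forall>t\<in>T. \<forall>x\<in>X. Psi t x \<in> G \<and> invertible (Psi t x)"
    and "\<forall>t\<in>T. \<forall>x\<in>X. mat_has_deriv (\<lambda>y. Psi t y) (D t x ** Psi t x) x"
    and "\<forall>k. \<forall>t\<in>T. \<forall>x\<in>X. mat_has_deriv (\<lambda>s. Psi (t(k := s)) x) (R k t x ** Psi t x) (t k)"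
  shows "\<exists>\<alpha> :: nat \<Rightarrow> ('m \<Rightarrow> complex) \<Rightarrow> complex poly.
     (\<forall>t\<in>T. \<exists>k\<le>cmat_dim g. \<alpha> k t \<noteq> 0) \<and>
     (\<forall>t\<in>T. \<forall>x\<in>X. (\<Sum>k\<le>cmat_dim g. cmscale (poly (\<alpha> k t) x) (Rjk D R j k t x)) = 0) \<and>
     (\<forall>E\<in>g. \<forall>t\<in>T. \<forall>x\<in>X.
        (\<Sum>k\<le>cmat_dim g. poly (\<alpha> k t) x * pderiv_t_iter j k (\<lambda>t'. W1 D Psi t' x E) t) = 0)"
proof -
  \<comment> \<open>The holomorphy hypotheses are implied by \<open>rational_in_x\<close>.\<close>
  have g: "cmat_subspace g" "\<forall>A\<in>g. \<forall>B\<in>g. mcomm A B \<in> g"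
    using assms(1)
    unfolding reductive_matrix_group_def reductive_lie_algebra_def lie_subalgebra_def by blast+
  have Rg: "\<forall>t\<in>T. \<forall>x\<in>X. R j t x \<in> g" and R: "rational_in_x T X (R j)"
    and inv: "\<forall>t\<in>T. \<forall>x\<in>X. invertible (Psi t x)"
    and dPsi: "\<forall>t\<in>T. \<forall>x\<in>X. mat_has_deriv (\<lambda>s. Psi (t(j := s)) x) (R j t x ** Psi t x) (t j)"
    using assms(5,7,10,12) by blast+
  have "\<forall>t\<in>T. \<exists>\<alpha>. (\<exists>k\<le>cmat_dim g. \<alpha> k \<noteq> 0) \<and>
      (\<forall>x\<in>X. (\<Sum>k\<le>cmat_dim g. cmscale (poly (\<alpha> k) x) (Rjk D R j k t x)) = 0)"
    using Rjk_relation[where R = R and j = j, OF g assms(2-4) Rg assms(6) R] by blast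
  then obtain \<alpha> where \<alpha>: "\<forall>t\<in>T. (\<exists>k\<le>cmat_dim g. \<alpha> t k \<noteq> 0) \<and>
      (\<forall>x\<in>X. (\<Sum>k\<le>cmat_dim g. cmscale (poly (\<alpha> t k) x) (Rjk D R j k t x)) = 0)"
    by (rule bchoice[elim_format]) blast
  have W: "(\<Sum>k\<le>cmat_dim g. poly (\<alpha> t k) x * pderiv_t_iter j k (\<lambda>t'. W1 D Psi t' x E) t) = 0"
    if "t \<in> T" "x \<in> X" for E t x
    by (rule W1_relation_of_Rjk_relation[where R = R and j = j, OF assms(2,6) R inv dPsi that])
      (use \<alpha> that in blast)
  show ?thesis
    by (intro exI[of _ "\<lambda>k t. \<alpha> t k"] conjI ballI) (use \<alpha> W in auto)
qed

end
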